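(* Let $M,N$ be weights of $\mathbb{R}^m,\mathbb{R}^n$, let $A\in\mathbb{R}^{m\times n}$ with $MA=AN$, and let $K\subseteq\mathbb{R}^n$ be a closed cone. Then $$\big((A^{[\dagger]})^{[*]}\circ I\circ K^{[*]}\big)^{[*]}\subseteq A\circ I\circ K+\mathcal{N}\big((A\circ I)^{[*]}\big).$$ If moreover $A^{[\dagger]}\circ A\circ K\subseteq K$, then equality holds.
   Context: A weight is a real symmetric matrix $W$ with $W^2=I$. $\mathbb{R}^m$ and $\mathbb{R}^n$ carry weights $M\in\mathbb{R}^{m\times m}$ and $N\in\mathbb{R}^{n\times n}$, respectively. The indefinite inner product on the space with weight $W$ is $[x,y]=\langle x,Wy\rangle$. Indefinite matrix product: if $B$ has $p$ columns and $C$ has $p$ rows (or is a vector in $\mathbb{R}^p$), $p\in\{m,n\}$, and $W$ is the weight of $\mathbb{R}^p$, then $B\circ C:=BWC$. $I$ denotes an identity matrix of the appropriate size. Indefinite adjoint of $B\in\mathbb{R}^{p\times q}$: $B^{[*]}:=W_qB^TW_p$, where $W_p,W_q$ are the weights of $\mathbb{R}^p,\mathbb{R}^q$. Indefinite Moore–Penrose inverse: $A^{[\dagger]}$ is the unique $X\in\mathbb{R}^{n\times m}$ such that - $A\circ X\circ A=A$, - $X\circ A\circ X=X$, - $(A\circ X)^{[*]}=A\circ X$, - $(X\circ A)^{[*]}=X\circ A$. It equals $NA^\dagger M$. Range and null space: for a matrix $B$ with $q$ columns, $\mathcal{R}(B)=\{B\circ x:x\in\mathbb{R}^q\}$ and $\mathcal{N}(B)=\{x\in\mathbb{R}^q:B\circ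 x=0\}$. A cone is a nonempty set closed under addition and under multiplication by nonnegative scalars. For $S$ a subset of $\mathbb{R}^p$ with weight $W$, the dual is $S^{[*]}=\{x\in\mathbb{R}^p:[x,t]\ge0\ \forall t\in S\}$; duals of subsets of $\mathbb{R}^m$ use $M$. For a matrix $B$ and a set $S$, $B\circ S=\{B\circ s:s\in S\}$. The sum of sets is the Minkowski sum. *)

theory Defs
  imports "HOL-Analysis.Analysis"
begin

definition is_weight :: "real^'p^'p \<Rightarrow> bool" where
  "is_weight W \<longleftrightarrow> transpose W = W \<and> W ** W = mat 1"

definition iprod :: "real^'p^'p \<Rightarrow> real^'p^'a \<Rightarrow> real^'b^'p \<Rightarrow> real^'b^'a" where
  "iprod W B C = B ** W ** C"

definition iprodv :: "real^'p^'p \<Rightarrow> real^'p^'a \<Rightarrow> real^'p \<Rightarrow> real^'a" where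
  "iprodv W B x = B *v (W *v x)"

definition iadj :: "real^'p^'p \<Rightarrow> real^'q^'q \<Rightarrow> real^'q^'p \<Rightarrow> real^'p^'q" where
  "iadj Wp Wq B = Wq ** transpose B ** Wp"

definition impinv :: "real^'m^'m \<Rightarrow> real^'n^'n \<Rightarrow> real^'n^'m \<Rightarrow> real^'m^'n" where
  "impinv M N A = (THE X.
      iprod M (iprod N A X) A = A \<and>
      iprod N (iprod M X A) X = X \<and>
      iadj M M (iprod N A X) = iprod N A X \<and>
      iadj N N (iprod M X A) = iprod M X A)"

definition inull :: "real^'q^'q \<Rightarrow> real^'q^'p \<Rightarrow> (real^'q) set" where
  "inull W B = {x. iprodv W B x = 0}"

definition idual :: "real^'p^'p \<Rightarrow> (real^'p) set \<Rightarrow> (real^'p) set" where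
  "idual W S = {x. \<forall>t\<in>S. x \<bullet> (W *v t) \<ge> 0}"

definition msum :: "('a::plus) set \<Rightarrow> 'a set \<Rightarrow> 'a set" where
  "msum X Y = {x + y | x y. x \<in> X \<and> y \<in> Y}"

end

theory Submission
  imports Defs
begin

text \<open>
  Since \<open>M A = A N\<close>, the matrix \<open>N A\<^sup>\<dagger> M\<close> is the Moore--Penrose inverse of \<open>M A N = A\<close>,
  so the indefinite Moore--Penrose inverse \<open>N A\<^sup>\<dagger> M\<close> is just \<open>A\<^sup>\<dagger>\<close>. The left-hand side, the dual of
  the adjoint image of the dual of \<open>K\<close>, is then the preimage \<open>{y. A\<^sup>\<dagger> y \<in> K}\<close> by the bipolar
  theorem. Every such \<open>y\<close> splits as \<open>A (A\<^sup>\<dagger> y) + (y - A A\<^sup>\<dagger> y)\<close>, the second summand lying in the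
  null space of \<open>A\<^sup>T\<close> because \<open>A\<^sup>T A A\<^sup>\<dagger> = A\<^sup>T\<close>. Conversely \<open>A\<^sup>\<dagger>\<close> annihilates that null space, so
  \<open>A\<^sup>\<dagger> (A k + u) = A\<^sup>\<dagger> A k\<close>, which stays in \<open>K\<close> when \<open>A\<^sup>\<dagger> A K \<subseteq> K\<close>.
\<close>

lemma transpose_eq_self_if_self_adjoint:
  fixes B :: "real^'n^'n"
  assumes "\<And>x y. (B *v x) \<bullet> y = x \<bullet> (B *v y)"
  shows "transpose B = B"
  unfolding matrix_eq
  by (metis assms dot_lmul_matrix transpose_matrix_vector vector_eq_rdot)

lemma inner_transpose_mulv: "(transpose A *v x) \<bullet> y = x \<bullet> ((A::real^'n^'m) *v y)"
  by (simp add: dot_lmul_matrix)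

definition orth_proj :: "'a::euclidean_space set \<Rightarrow> 'a \<Rightarrow> 'a" where
  "orth_proj S x = (SOME y. y \<in> span S \<and> (\<forall>w\<in>span S. orthogonal (x - y) w))"

lemma orth_proj_in_span: "orth_proj S x \<in> span S"
  and orth_proj_orthogonal: "w \<in> span S \<Longrightarrow> orthogonal (x - orth_proj S x) w"
proof -
  have "\<exists>y. y \<in> span S \<and> (\<forall>w\<in>span S. orthogonal (x - y) w)"
    by (metis orthogonal_subspace_decomp_exists add_diff_cancel_left')
  from someI_ex[OF this] show "orth_proj S x \<in> span S"
    and "w \<in> span S \<Longrightarrow> orthogonal (x - orth_proj S x) w"
    unfolding orth_proj_def by auto
qed

lemma orth_proj_unique:
  assumes "y \<in> span S" and "\<And>w. w \<in> span S \<Longrightarrow> orthogonal (x - y) w"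
  shows "orth_proj S x = y"
proof -
  let ?d = "orth_proj S x - y"
  have d: "?d \<in> span S" using assms(1) orth_proj_in_span span_diff by blast
  have "?d \<bullet> ?d = ((x - y) - (x - orth_proj S x)) \<bullet> ?d" by simp
  also have "\<dots> = 0"
    using assms(2)[OF d] orth_proj_orthogonal[OF d] by (simp add: orthogonal_def inner_diff_left)
  finally show ?thesis by simp
qed

lemma orth_proj_id: "x \<in> span S \<Longrightarrow> orth_proj S x = x"
  by (rule orth_proj_unique) (auto simp: orthogonal_def)

lemma linear_orth_proj: "linear (orth_proj S)"
proof
  fix x y
  show "orth_proj S (x + y) = orth_proj S x + orth_proj S y"
    using orth_proj_orthogonal[of _ S x] orth_proj_orthogonal[of _ S y]
    by (intro orth_proj_unique)
       (auto simp: orth_proj_in_span span_add orthogonal_def inner_diff_left inner_add_left)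
next
  fix c :: real and x
  show "orth_proj S (c *\<^sub>R x) = c *\<^sub>R orth_proj S x"
    using orth_proj_orthogonal[of _ S x]
    by (intro orth_proj_unique)
       (auto simp: orth_proj_in_span span_mul orthogonal_def inner_diff_left simp flip: scaleR_diff_right)
qed

lemma orth_proj_self_adjoint: "orth_proj S x \<bullet> y = x \<bullet> orth_proj S y"
proof -
  have "orth_proj S x \<bullet> y = orth_proj S x \<bullet> orth_proj S y"
    using orth_proj_orthogonal[OF orth_proj_in_span[of S x], of y]
    by (simp add: orthogonal_def inner_diff_left inner_diff_right inner_commute)
  also have "\<dots> = x \<bullet> orth_proj S y"
    using orth_proj_orthogonal[OF orth_proj_in_span[of S y], of x]
    by (simp add: orthogonal_def inner_diff_left)
  finally show ?thesis .
qed

lemma mulv_orth_proj_range_transpose: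
  fixes A :: "real^'n^'m"
  shows "A *v orth_proj (range ((*v) (transpose A))) x = A *v x"
proof -
  let ?W = "range ((*v) (transpose A))"
  have "(A *v (x - orth_proj ?W x)) \<bullet> z = 0" for z
    using orth_proj_orthogonal[of "transpose A *v z" ?W x]
    by (simp add: span_base orthogonal_def inner_commute flip: inner_transpose_mulv)
  then show ?thesis
    by (metis inner_eq_zero_iff matrix_vector_mult_diff_distrib right_minus_eq)
qed

lemma inj_on_mulv_range_transpose:
  fixes A :: "real^'n^'m"
  shows "inj_on ((*v) A) (range ((*v) (transpose A)))"
proof (rule inj_onI, elim rangeE)
  fix z z' w w'
  assume eq: "A *v w = A *v w'" and w: "w = transpose A *v z" and w': "w' = transpose A *v z'"
  have "w - w' = transpose A *v (z - z')"
    by (simp only: w w' matrix_vector_mult_diff_distrib)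
  then have "(w - w') \<bullet> (w - w') = (z - z') \<bullet> (A *v (w - w'))"
    by (metis inner_transpose_mulv)
  also have "\<dots> = 0" by (simp add: eq matrix_vector_mult_diff_distrib)
  finally show "w = w'" by simp
qed

definition moore_penrose :: "real^'n^'m \<Rightarrow> real^'m^'n \<Rightarrow> bool" where
  "moore_penrose A Y \<longleftrightarrow> A ** Y ** A = A \<and> Y ** A ** Y = Y \<and>
     transpose (A ** Y) = A ** Y \<and> transpose (Y ** A) = Y ** A"

lemma moore_penrose_if_projections:
  fixes A :: "real^'n^'m"
  defines "R \<equiv> range ((*v) A)" and "W \<equiv> range ((*v) (transpose A))"
  assumes AY: "\<And>y. A *v (Y *v y) = orth_proj R y"
    and YA: "\<And>x. Y *v (A *v x) = orth_proj W x"
    and Y_W: "\<And>y. Y *v y \<in> W"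
  shows "moore_penrose A Y"
proof -
  have "A ** Y ** A = A" unfolding matrix_eq
    using YA mulv_orth_proj_range_transpose[of A] unfolding W_def
    by (simp flip: matrix_vector_mul_assoc)
  moreover have "Y ** A ** Y = Y" unfolding matrix_eq
    by (simp add: YA Y_W orth_proj_id span_base flip: matrix_vector_mul_assoc)
  moreover have "transpose (A ** Y) = A ** Y" "transpose (Y ** A) = Y ** A"
    by (rule transpose_eq_self_if_self_adjoint,
        simp add: AY YA orth_proj_self_adjoint flip: matrix_vector_mul_assoc)+
  ultimately show ?thesis unfolding moore_penrose_def by blast
qed

text \<open>\<open>Y\<close> is the inverse of \<open>A\<close> on the range of \<open>A\<^sup>T\<close>, precomposed with the orthogonal projection
  onto the range of \<open>A\<close>.\<close>

lemma moore_penrose_exists: "\<exists>Y. moore_penrose (A::real^'n^'m) Y"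
proof -
  define R where "R = range ((*v) A)"
  define W where "W = range ((*v) (transpose A))"
  have "subspace R" "subspace W"
    unfolding R_def W_def by (intro linear_subspace_image matrix_vector_mul_linear subspace_UNIV)+
  then have span_R: "span R = R" and span_W: "span W = W" by (simp_all add: span_eq_iff)
  obtain h where hW: "\<And>y. h y \<in> W" and "linear h" and h: "\<And>w. w \<in> W \<Longrightarrow> h (A *v w) = w"
    using linear_exists_left_inverse_on[OF matrix_vector_mul_linear \<open>subspace W\<close>
        inj_on_mulv_range_transpose[of A, folded W_def]] by blast
  have A_proj: "A *v orth_proj W x = A *v x" for x
    unfolding W_def by (rule mulv_orth_proj_range_transpose)
  have hA: "h (A *v x) = orth_proj W x" for x
    using h[of "orth_proj W x"] orth_proj_in_span[of W x] span_W A_proj by simp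
  define Y where "Y = matrix (h \<circ> orth_proj R)"
  have Y: "Y *v y = h (orth_proj R y)" for y
    unfolding Y_def by (simp add: matrix_works linear_compose[OF linear_orth_proj \<open>linear h\<close>])
  have "A *v (Y *v y) = orth_proj R y" for y
  proof -
    obtain x where x: "orth_proj R y = A *v x"
      using orth_proj_in_span[of R y] span_R unfolding R_def by auto
    show ?thesis unfolding Y x hA A_proj ..
  qed
  moreover have "Y *v (A *v x) = orth_proj W x" for x
  proof -
    have "orth_proj R (A *v x) = A *v x"
      by (rule orth_proj_id) (unfold span_R, simp add: R_def)
    then show ?thesis by (simp add: Y hA)
  qed
  ultimately have "moore_penrose A Y"
    using hW by (intro moore_penrose_if_projections) (simp_all add: R_def W_def Y)
  then show ?thesis ..
qed

lemma moore_penrose_unique: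
  assumes "moore_penrose A Y" and "moore_penrose A Y'"
  shows "Y = Y'"
proof -
  have a: "A ** Y ** A = A" "Y ** A ** Y = Y" "transpose (A ** Y) = A ** Y" "transpose (Y ** A) = Y ** A"
   and b: "A ** Y' ** A = A" "Y' ** A ** Y' = Y'" "transpose (A ** Y') = A ** Y'" "transpose (Y' ** A) = Y' ** A"
    using assms unfolding moore_penrose_def by auto
  have AY: "A ** Y = A ** Y'"
  proof -
    have "A ** Y = transpose Y ** transpose (A ** Y' ** A)"
      using a(3) b(1) by (simp add: matrix_transpose_mul)
    also have "\<dots> = transpose (A ** Y) ** transpose (A ** Y')"
      by (simp add: matrix_transpose_mul matrix_mul_assoc)
    also have "\<dots> = A ** Y ** A ** Y'" using a(3) b(3) by (simp add: matrix_mul_assoc)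
    finally show ?thesis using a(1) by simp
  qed
  have YA: "Y ** A = Y' ** A"
  proof -
    have "Y ** A = transpose (A ** Y' ** A) ** transpose Y"
      using a(4) b(1) by (simp add: matrix_transpose_mul)
    also have "\<dots> = transpose (Y' ** A) ** transpose (Y ** A)"
      by (simp add: matrix_transpose_mul matrix_mul_assoc)
    also have "\<dots> = Y' ** (A ** Y ** A)" using a(4) b(4) by (simp add: matrix_mul_assoc)
    finally show ?thesis using a(1) by simp
  qed
  have "Y = Y ** A ** Y" using a(2) by simp
  also have "\<dots> = Y' ** A ** Y'" using AY YA by (metis matrix_mul_assoc)
  finally show ?thesis using b(2) by simp
qed

lemma transpose_mul_moore_penrose:
  assumes "moore_penrose A Y"
  shows "transpose A ** A ** Y = transpose A"
proof -
  have "transpose A ** A ** Y = transpose A ** transpose (A ** Y)"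
    using assms by (simp add: moore_penrose_def matrix_mul_assoc)
  also have "\<dots> = transpose (A ** Y ** A)" by (simp add: matrix_transpose_mul matrix_mul_assoc)
  finally show ?thesis using assms by (simp add: moore_penrose_def)
qed

lemma moore_penrose_mulv_null_transpose:
  assumes "moore_penrose A Y" and "transpose A *v u = 0"
  shows "Y *v u = 0"
proof -
  have "Y = Y ** transpose (A ** Y)" using assms(1) by (simp add: moore_penrose_def matrix_mul_assoc)
  also have "\<dots> = Y ** transpose Y ** transpose A" by (simp add: matrix_transpose_mul matrix_mul_assoc)
  finally have "Y *v u = Y *v (transpose Y *v (transpose A *v u))"
    by (metis matrix_vector_mul_assoc)
  then show ?thesis using assms(2) by simp
qed

lemma is_weight_simps:
  assumes "is_weight W"
  shows "transpose W = W" "W ** W = mat 1" "W ** (W ** B) = B" "C ** W ** W = C" "W *v (W *v x) = x"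
proof -
  from assms show "transpose W = W" and WW: "W ** W = mat 1" by (auto simp: is_weight_def)
  show "W ** (W ** B) = B" by (simp add: matrix_mul_assoc WW)
  show "C ** W ** W = C" by (simp add: WW flip: matrix_mul_assoc)
  show "W *v (W *v x) = x" by (simp add: matrix_vector_mul_assoc WW)
qed

lemma is_weight_cancel:
  assumes "is_weight W"
  shows "W ** B = W ** B' \<longleftrightarrow> B = B'" and "C ** W = C' ** W \<longleftrightarrow> C = C'"
  by (metis assms is_weight_simps(3,4))+

lemma is_weight_inner: "is_weight W \<Longrightarrow> (W *v x) \<bullet> y = x \<bullet> (W *v y)"
  by (metis inner_transpose_mulv is_weight_simps(1))

lemma moore_penrose_weight_conj:
  assumes M: "is_weight M" and N: "is_weight N" and Y: "moore_penrose A Y"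
  shows "moore_penrose (M ** A ** N) (N ** Y ** M)"
proof -
  note W = is_weight_simps[OF M] is_weight_simps[OF N]
  have "M ** A ** N ** (N ** Y ** M) ** (M ** A ** N) = M ** (A ** Y ** A) ** N"
    and "N ** Y ** M ** (M ** A ** N) ** (N ** Y ** M) = N ** (Y ** A ** Y) ** M"
    and "transpose (M ** A ** N ** (N ** Y ** M)) = M ** transpose (A ** Y) ** M"
    and "transpose (N ** Y ** M ** (M ** A ** N)) = N ** transpose (Y ** A) ** N"
    by (simp_all add: matrix_mul_assoc matrix_transpose_mul W)
  with Y show ?thesis
    unfolding moore_penrose_def by (simp add: matrix_mul_assoc W)
qed

definition indefinite_penrose ::
    "real^'m^'m \<Rightarrow> real^'n^'n \<Rightarrow> real^'n^'m \<Rightarrow> real^'m^'n \<Rightarrow> bool" where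
  "indefinite_penrose M N A X \<longleftrightarrow>
     iprod M (iprod N A X) A = A \<and> iprod N (iprod M X A) X = X \<and>
     iadj M M (iprod N A X) = iprod N A X \<and> iadj N N (iprod M X A) = iprod M X A"

lemma indefinite_penrose_weight_conj_iff:
  assumes M: "is_weight M" and N: "is_weight N"
  shows "indefinite_penrose M N A (N ** Z ** M) \<longleftrightarrow> moore_penrose A Z"
proof -
  note W = is_weight_simps[OF M] is_weight_simps[OF N]
  have "iprod M (iprod N A (N ** Z ** M)) A = A ** Z ** A"
    and "iprod N (iprod M (N ** Z ** M) A) (N ** Z ** M) = N ** (Z ** A ** Z) ** M"
    and "iadj M M (iprod N A (N ** Z ** M)) = transpose (A ** Z) ** M"
    and "iprod N A (N ** Z ** M) = A ** Z ** M"
    and "iadj N N (iprod M (N ** Z ** M) A) = N ** transpose (Z ** A)"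
    and "iprod M (N ** Z ** M) A = N ** (Z ** A)"
    by (simp_all add: iprod_def iadj_def matrix_mul_assoc matrix_transpose_mul W)
  then show ?thesis
    unfolding indefinite_penrose_def moore_penrose_def
    by (simp only: is_weight_cancel[OF M] is_weight_cancel[OF N])
qed

lemma impinv_eq_weight_conj:
  assumes M: "is_weight M" and N: "is_weight N" and Y: "moore_penrose A Y"
  shows "impinv M N A = N ** Y ** M"
  unfolding impinv_def indefinite_penrose_def[symmetric]
proof (rule the_equality)
  show "indefinite_penrose M N A (N ** Y ** M)"
    using Y indefinite_penrose_weight_conj_iff[OF M N] by blast
next
  fix X assume "indefinite_penrose M N A X"
  moreover have X: "X = N ** (N ** X ** M) ** M"
    by (simp add: matrix_mul_assoc is_weight_simps[OF M] is_weight_simps[OF N])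
  ultimately have "moore_penrose A (N ** X ** M)"
    using indefinite_penrose_weight_conj_iff[OF M N] by metis
  then have "N ** X ** M = Y" using Y moore_penrose_unique by blast
  then show "X = N ** Y ** M" using X by simp
qed

lemma impinv_eq_moore_penrose:
  assumes M: "is_weight M" and N: "is_weight N" and MA: "M ** A = A ** N" and Y: "moore_penrose A Y"
  shows "impinv M N A = Y"
proof -
  have "M ** A ** N = A" unfolding MA by (simp add: is_weight_simps[OF N])
  then have "moore_penrose A (N ** Y ** M)" using moore_penrose_weight_conj[OF M N Y] by simp
  then have "N ** Y ** M = Y" using Y moore_penrose_unique by blast
  then show ?thesis using impinv_eq_weight_conj[OF M N Y] by simp
qed

lemma separating_hyperplane_closed_cone:
  fixes K :: "'a::euclidean_space set"
  assumes "convex_cone K" and "closed K" and "z \<notin> K"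
  obtains a where "a \<bullet> z < 0" and "\<And>x. x \<in> K \<Longrightarrow> 0 \<le> a \<bullet> x"
proof -
  have "convex K" and "conic K" using assms(1) by (auto simp: convex_cone_def)
  then obtain a b where az: "a \<bullet> z < b" and aK: "\<And>x. x \<in> K \<Longrightarrow> b < a \<bullet> x"
    using separating_hyperplane_closed_point[of K z] assms(2,3) by blast
  have "b < 0" using aK[OF convex_cone_contains_0[OF assms(1)]] by simp
  have "0 \<le> a \<bullet> x" if "x \<in> K" for x
  proof (rule ccontr)
    assume neg: "\<not> 0 \<le> a \<bullet> x"
    then have "(b / (a \<bullet> x)) *\<^sub>R x \<in> K"
      using \<open>conic K\<close> \<open>x \<in> K\<close> \<open>b < 0\<close> by (simp add: conic_def divide_nonpos_neg)
    from aK[OF this] show False using neg by simp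
  qed
  with that az \<open>b < 0\<close> show ?thesis by force
qed

lemma idual_idual:
  assumes W: "is_weight W" and "convex_cone K" and "closed K"
  shows "idual W (idual W K) = K"
proof
  have "z \<bullet> (W *v t) = t \<bullet> (W *v z)" for z t
    by (metis is_weight_inner[OF W] inner_commute)
  then show "K \<subseteq> idual W (idual W K)"
    unfolding idual_def by auto
  show "idual W (idual W K) \<subseteq> K"
  proof
    fix z assume z: "z \<in> idual W (idual W K)"
    show "z \<in> K"
    proof (rule ccontr)
      assume "z \<notin> K"
      then obtain a where "a \<bullet> z < 0" and a: "\<And>x. x \<in> K \<Longrightarrow> 0 \<le> a \<bullet> x"
        using separating_hyperplane_closed_cone assms(2,3) by blast
      have "W *v a \<in> idual W K"
        using a by (simp add: idual_def is_weight_inner[OF W] is_weight_simps(5)[OF W])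
      with z have "0 \<le> z \<bullet> (W *v (W *v a))" unfolding idual_def by blast
      then have "0 \<le> z \<bullet> a" by (simp add: is_weight_simps(5)[OF W])
      with \<open>a \<bullet> z < 0\<close> show False by (simp add: inner_commute)
    qed
  qed
qed

lemma preimage_moore_penrose_subset_msum:
  assumes "moore_penrose A Y"
  shows "{y. Y *v y \<in> K} \<subseteq> msum ((\<lambda>k. A *v k) ` K) {u. transpose A *v u = 0}"
proof
  fix y assume "y \<in> {y. Y *v y \<in> K}"
  moreover have "transpose A *v (A *v (Y *v y)) = transpose A *v y"
    by (metis matrix_vector_mul_assoc transpose_mul_moore_penrose[OF assms])
  then have "transpose A *v (y - A *v (Y *v y)) = 0"
    by (simp only: matrix_vector_mult_diff_distrib diff_self)
  ultimately show "y \<in> msum ((\<lambda>k. A *v k) ` K) {u. transpose A *v u = 0}"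
    unfolding msum_def by force
qed

lemma msum_subset_preimage_moore_penrose:
  assumes "moore_penrose A Y" and "(\<lambda>k. Y *v (A *v k)) ` K \<subseteq> K"
  shows "msum ((\<lambda>k. A *v k) ` K) {u. transpose A *v u = 0} \<subseteq> {y. Y *v y \<in> K}"
  using assms moore_penrose_mulv_null_transpose[OF assms(1)]
  by (auto simp: msum_def matrix_vector_right_distrib)

lemma iprodv_iprod_mat1: "is_weight W \<Longrightarrow> iprodv W (iprod W B (mat 1)) x = B *v x"
  by (simp add: iprodv_def iprod_def matrix_vector_mul_assoc is_weight_simps)

lemma inull_iadj_iprod_mat1:
  assumes M: "is_weight M" and N: "is_weight N"
  shows "inull M (iadj M N (iprod N A (mat 1))) = {u. transpose A *v u = 0}"
proof -
  have "iadj M N (iprod N A (mat 1)) = transpose A ** M"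
    by (simp add: iadj_def iprod_def matrix_transpose_mul matrix_mul_assoc is_weight_simps[OF N])
  then show ?thesis
    by (simp add: inull_def iprodv_def matrix_vector_mul_assoc is_weight_simps[OF M] flip: matrix_mul_assoc)
qed

lemma idual_image_iadj:
  assumes M: "is_weight M" and N: "is_weight N"
  shows "idual M ((\<lambda>k. iadj N M X *v k) ` S) = {y. X *v y \<in> idual N S}"
proof -
  have "y \<bullet> (M *v (iadj N M X *v s)) = (X *v y) \<bullet> (N *v s)" for y s
  proof -
    have "M *v (iadj N M X *v s) = transpose X *v (N *v s)"
      by (simp add: iadj_def matrix_vector_mul_assoc matrix_mul_assoc is_weight_simps[OF M])
    then show ?thesis by (metis inner_transpose_mulv inner_commute)
  qed
  then show ?thesis unfolding idual_def by auto
qed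

lemma iprodv_iprod_commuting:
  assumes N: "is_weight N" and MA: "M ** A = A ** N"
  shows "iprodv N (iprod M X A) x = X *v (A *v x)"
proof -
  have "X ** M ** A ** N = X ** A"
    by (simp add: MA is_weight_simps[OF N] flip: matrix_mul_assoc)
  then show ?thesis by (simp add: iprodv_def iprod_def matrix_vector_mul_assoc)
qed

theorem lemma3p6:
  fixes M :: "real^'m^'m" and N :: "real^'n^'n" and A :: "real^'n^'m"
    and K :: "(real^'n) set"
  assumes "is_weight M" and "is_weight N"
    and "M ** A = A ** N"
    and "convex_cone K" and "closed K"
  shows "idual M ((\<lambda>k. iprodv N (iprod N (iadj N M (impinv M N A)) (mat 1)) k) ` idual N K)
           \<subseteq> msum ((\<lambda>k. iprodv N (iprod N A (mat 1)) k) ` K)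
                   (inull M (iadj M N (iprod N A (mat 1))))
         \<and> ((\<lambda>k. iprodv N (iprod M (impinv M N A) A) k) ` K \<subseteq> K \<longrightarrow>
         idual M ((\<lambda>k. iprodv N (iprod N (iadj N M (impinv M N A)) (mat 1)) k) ` idual N K)
           = msum ((\<lambda>k. iprodv N (iprod N A (mat 1)) k) ` K)
                   (inull M (iadj M N (iprod N A (mat 1)))))"
proof -
  note M = assms(1) and N = assms(2)
  obtain Y where Y: "moore_penrose A Y" using moore_penrose_exists by blast
  have impinv: "impinv M N A = Y" by (rule impinv_eq_moore_penrose[OF M N assms(3) Y])
  have "(\<lambda>k. iprodv N (iprod N (iadj N M Y) (mat 1)) k) = (\<lambda>k. iadj N M Y *v k)"
    by (simp add: iprodv_iprod_mat1[OF N])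
  then have dual: "idual M ((\<lambda>k. iprodv N (iprod N (iadj N M Y) (mat 1)) k) ` idual N K)
      = {y. Y *v y \<in> K}"
    by (simp only: idual_image_iadj[OF M N] idual_idual[OF N assms(4,5)])
  have image: "(\<lambda>k. iprodv N (iprod N A (mat 1)) k) = (\<lambda>k. A *v k)"
    by (simp add: iprodv_iprod_mat1[OF N])
  have hyp: "(\<lambda>k. iprodv N (iprod M Y A) k) = (\<lambda>k. Y *v (A *v k))"
    by (simp add: iprodv_iprod_commuting[OF N assms(3)])
  show ?thesis
    unfolding impinv dual image hyp inull_iadj_iprod_mat1[OF M N]
    using preimage_moore_penrose_subset_msum[OF Y] msum_subset_preimage_moore_penrose[OF Y]
    by (intro conjI impI subset_antisym)
qed

end
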